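(* Let $f:\mathbb{R}^n\to\mathbb{R}\cup\{+\infty\}$ have a nonempty convex domain and let $S:\mathbb{R}^n\to\mathbb{R}\cup\{+\infty\}$ be even. If $f$ is directionally $S$-smooth, then for all $x_0,x_1\in\mathrm{dom}\,f$ and all $y_0\in\partial f(x_0)$, $y_1\in\partial f(x_1)$, \[ S^*(y_1-y_0)\le S(x_1-x_0). \]
   Context: $f$ is directionally $S$-smooth if $f((1-t)x_0+tx_1)+t(1-t)S(x_1-x_0)\ge(1-t)f(x_0)+tf(x_1)$ for all $t\in(0,1)$ and all $x_0,x_1\in\mathbb{R}^n$ with $(1-t)x_0+tx_1\in\mathrm{dom} f$. The subdifferential $\partial f(x)$ is the set of $a\in\mathbb{R}^n$ with $f(y)\ge f(x)+\langle a,y-x\rangle$ for all $y\in\mathbb{R}^n$ (possibly empty, $f$ not assumed convex). $S^*(v)=\sup_{u\in\mathbb{R}^n}\{\langle u,v\rangle-S(u)\}$. *)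

theory Defs
  imports "HOL-Analysis.Analysis"
begin

text \<open>Extended-real-valued functions into R \<union> {+\<infinity>} are modelled as functions into
  ereal that never take the value -\<infinity>.\<close>

definition edom :: "('a \<Rightarrow> ereal) \<Rightarrow> 'a set" where
  "edom f = {x. f x < \<infinity>}"

definition directionally_smooth :: "('a::real_vector \<Rightarrow> ereal) \<Rightarrow> ('a \<Rightarrow> ereal) \<Rightarrow> bool" where
  "directionally_smooth S f \<longleftrightarrow>
     (\<forall>t::real. \<forall>x0 x1. 0 < t \<and> t < 1 \<and> (1 - t) *\<^sub>R x0 + t *\<^sub>R x1 \<in> edom f \<longrightarrow>
        f ((1 - t) *\<^sub>R x0 + t *\<^sub>R x1) + ereal (t * (1 - t)) * S (x1 - x0)
          \<ge> ereal (1 - t) * f x0 + ereal t * f x1)"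

definition subdiff :: "('a::real_inner \<Rightarrow> ereal) \<Rightarrow> 'a \<Rightarrow> 'a set" where
  "subdiff f x = {a. \<forall>y. f y \<ge> f x + ereal (inner a (y - x))}"

definition fconj :: "('a::real_inner \<Rightarrow> ereal) \<Rightarrow> 'a \<Rightarrow> ereal" where
  "fconj S v = (SUP u. ereal (inner u v) - S u)"

end

theory Submission
  imports Defs
begin

text \<open>Fix a direction \<open>v\<close> and apply directional smoothness to the segment from
  \<open>x\<^sub>1 - t v\<close> to \<open>x\<^sub>1 + (1 - t) v\<close>, whose point with weight \<open>t\<close> is \<open>x\<^sub>1\<close>; bounding \<open>f\<close> at the
  two endpoints from below by the subgradient inequalities at \<open>x\<^sub>0\<close> and \<open>x\<^sub>1\<close> and letting
  \<open>t \<rightarrow> 1\<close> gives \<open>S\<^sup>*(y\<^sub>1 - y\<^sub>0) \<le> D(x\<^sub>1, x\<^sub>0)\<close>, where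
  \<open>D(x\<^sub>1, x\<^sub>0) = f x\<^sub>1 - f x\<^sub>0 - \<langle>y\<^sub>0, x\<^sub>1 - x\<^sub>0\<rangle>\<close>.
  Since \<open>S\<close> is even, so is \<open>S\<^sup>*\<close>, and exchanging the roles of the two points bounds
  \<open>S\<^sup>*(y\<^sub>1 - y\<^sub>0)\<close> also by \<open>D(x\<^sub>0, x\<^sub>1)\<close>. The two gaps add up to \<open>\<langle>y\<^sub>1 - y\<^sub>0, x\<^sub>1 - x\<^sub>0\<rangle>\<close>, so
  \<open>S\<^sup>*(y\<^sub>1 - y\<^sub>0)\<close> is at most half of it, and the Fenchel--Young inequality at \<open>x\<^sub>1 - x\<^sub>0\<close>
  turns this into the claim.\<close>

lemma fenchel_young_fconj: "ereal (inner u v) - S u \<le> fconj S v"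
  unfolding fconj_def by (rule SUP_upper) simp

lemma fconj_uminus_le:
  assumes "\<And>u. S (- u) = S u"
  shows "fconj S (- v) \<le> fconj S v"
  unfolding fconj_def[of S "- v"]
proof (rule SUP_least)
  fix u
  have "ereal (inner u (- v)) - S u = ereal (inner (- u) v) - S (- u)"
    using assms by simp
  also have "\<dots> \<le> fconj S v"
    by (rule fenchel_young_fconj)
  finally show "ereal (inner u (- v)) - S u \<le> fconj S v" .
qed

lemma fconj_uminus:
  assumes "\<And>u. S (- u) = S u"
  shows "fconj S (- v) = fconj S v"
  using fconj_uminus_le[of S v] fconj_uminus_le[of S "- v"] assms
  by (simp add: order_antisym)

lemma fconj_le_if_le_half_inner:
  assumes "fconj S y \<le> ereal (inner y d / 2)"
  shows "fconj S y \<le> S d"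
proof -
  have "ereal (inner y d) - S d \<le> ereal (inner y d / 2)"
    using fenchel_young_fconj[of d y S] assms by (simp add: inner_commute)
  then have "ereal (inner y d / 2) \<le> S d"
    by (cases "S d") auto
  with assms show ?thesis by simp
qed

lemma directionally_smooth_subgradient_step:
  fixes f S :: "'a::real_inner \<Rightarrow> ereal"
  assumes smooth: "directionally_smooth S f" and x1: "x1 \<in> edom f"
    and y0: "y0 \<in> subdiff f x0" and y1: "y1 \<in> subdiff f x1"
    and f0: "f x0 = ereal f0" and f1: "f x1 = ereal f1" and Sv: "S v = ereal s"
    and t: "0 < t" "t < 1"
  shows "t * (inner (y1 - y0) v - s) \<le> f1 - f0 - inner y0 (x1 - x0)"
proof -
  define a where "a = x1 - t *\<^sub>R v"
  define b where "b = x1 + (1 - t) *\<^sub>R v"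
  have mid: "(1 - t) *\<^sub>R a + t *\<^sub>R b = x1" and dir: "b - a = v"
    by (simp_all add: a_def b_def algebra_simps)
  have "ereal (1 - t) * ereal (f0 + inner y0 (a - x0)) \<le> ereal (1 - t) * f a"
    using y0 f0 t unfolding subdiff_def by (intro ereal_mult_left_mono) auto
  moreover have "ereal t * ereal (f1 + inner y1 (b - x1)) \<le> ereal t * f b"
    using y1 f1 t unfolding subdiff_def by (intro ereal_mult_left_mono) auto
  ultimately have "ereal ((1 - t) * (f0 + inner y0 (a - x0)) + t * (f1 + inner y1 (b - x1)))
      \<le> ereal (1 - t) * f a + ereal t * f b"
    using add_mono by fastforce
  also have "\<dots> \<le> f x1 + ereal (t * (1 - t)) * S v"
    using smooth t x1 mid dir unfolding directionally_smooth_def by metis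
  finally have "(1 - t) * (f0 + inner y0 (a - x0)) + t * (f1 + inner y1 (b - x1))
      \<le> f1 + t * (1 - t) * s"
    using f1 Sv by simp
  then have "(1 - t) * (t * (inner (y1 - y0) v - s)) \<le> (1 - t) * (f1 - f0 - inner y0 (x1 - x0))"
    by (simp add: a_def b_def algebra_simps)
  then show ?thesis
    using t by simp
qed

lemma directionally_smooth_fconj_subgradient_le:
  fixes f S :: "'a::real_inner \<Rightarrow> ereal"
  assumes S_proper: "\<And>u. S u \<noteq> -\<infinity>"
    and smooth: "directionally_smooth S f" and x1: "x1 \<in> edom f"
    and y0: "y0 \<in> subdiff f x0" and y1: "y1 \<in> subdiff f x1"
    and f0: "f x0 = ereal f0" and f1: "f x1 = ereal f1"
  shows "fconj S (y1 - y0) \<le> ereal (f1 - f0 - inner y0 (x1 - x0))"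
  unfolding fconj_def
proof (rule SUP_least)
  fix v
  show "ereal (inner v (y1 - y0)) - S v \<le> ereal (f1 - f0 - inner y0 (x1 - x0))"
  proof (cases "S v")
    case (real s)
    have "inner (y1 - y0) v - s \<le> f1 - f0 - inner y0 (x1 - x0)"
      using directionally_smooth_subgradient_step[OF smooth x1 y0 y1 f0 f1 real]
      by (rule field_le_mult_one_interval)
    then show ?thesis
      using real by (simp add: inner_commute)
  qed (use S_proper in auto)
qed

theorem proposition2p12:
  fixes f S :: "'a::euclidean_space \<Rightarrow> ereal"
  assumes f_proper: "\<And>x. f x \<noteq> -\<infinity>"
    and S_proper: "\<And>u. S u \<noteq> -\<infinity>"
    and dom_nonempty: "edom f \<noteq> {}"
    and dom_convex: "convex (edom f)"
    and S_even: "\<And>u. S (- u) = S u"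
    and smooth: "directionally_smooth S f"
    and x0: "x0 \<in> edom f" and x1: "x1 \<in> edom f"
    and y0: "y0 \<in> subdiff f x0" and y1: "y1 \<in> subdiff f x1"
  shows "fconj S (y1 - y0) \<le> S (x1 - x0)"
proof -
  obtain f0 f1 where f0: "f x0 = ereal f0" and f1: "f x1 = ereal f1"
    using x0 x1 f_proper unfolding edom_def by (cases "f x0"; cases "f x1") auto
  have "fconj S (y1 - y0) \<le> ereal (f1 - f0 - inner y0 (x1 - x0))"
    by (rule directionally_smooth_fconj_subgradient_le[OF S_proper smooth x1 y0 y1 f0 f1])
  moreover have "fconj S (y1 - y0) \<le> ereal (f0 - f1 - inner y1 (x0 - x1))"
    using directionally_smooth_fconj_subgradient_le[OF S_proper smooth x0 y1 y0 f1 f0]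
      fconj_uminus[of S "y1 - y0", OF S_even] by simp
  moreover have "(f1 - f0 - inner y0 (x1 - x0)) + (f0 - f1 - inner y1 (x0 - x1))
      = inner (y1 - y0) (x1 - x0)"
    by (simp add: algebra_simps)
  ultimately have "fconj S (y1 - y0) \<le> ereal (inner (y1 - y0) (x1 - x0) / 2)"
    by (cases "fconj S (y1 - y0)") auto
  then show ?thesis
    by (rule fconj_le_if_le_half_inner)
qed

end
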